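(* Algorithm 1, when run on an $n$-dimensional unique sink orientation $\psi$ with starting vertex $v^0 \in Q^n$, needs at most $O(\alpha^\rho)$ vertex evaluations, where $\rho = |r_\psi(v^0)|$ and $1<\alpha < \phi$ is the constant in the running time bound of the Fibonacci Seesaw algorithm ($\phi$ the golden ratio).
   Context: Let $Q^n = 2^{[n]}$ be the vertex set of the $n$-cube, with $u,v$ adjacent iff $|u\oplus v|=1$; faces are $F_{J,v}=\{u : v\oplus u\subseteq J\}$ for $J\subseteq[n]$, of dimension $|J|$. A unique sink orientation (USO) is an orientation of the cube's edges such that every nonempty face has a unique sink (vertex with no outgoing edges within the face). The outmap $s_\psi(v)$ is the set of coordinates $j$ such that the edge $\{v,v\oplus\{j\}\}$ is directed away from $v$. The reachmap is $r_\psi(v)=s_\psi(v)\cup\{j : \exists u \text{ reachable from } v \text{ by a directed path with } j\in s_\psi(u)\}$. A vertex evaluation is an oracle query returning $s_\psi(v)$ for a given $v$. The Fibonacci Seesaw algorithm (Szabó and Welzl) finds the sink of any $k$-dimensional USO (in particular of any $k$-face of $\psi$) using $O(\alpha^k)$ vertex evaluations, for a constant $1<\alpha<\phi=(1+\sqrt5)/2$. Algorithm 1: given a starting vertex $v^0$, set $E^0=\emptyset$ and $j=0$; while $s_\psi(v^j)\neq\emptyset$: pick any $b\in s_\psi(v^j)$, let $v^{j+1}$ be the sink of the face $F_{E^j, v^j\oplus\{b\}}$ computed by the Fibonacci Seesaw algorithm, set $E^{j+1}=E^j\cup\{b\}$ and $j\leftarrow j+1$; it stops when $s_\psi(v^j)=\emptyset$.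 *)

theory Defs
  imports Complex_Main
begin

text \<open>Vertices of the n-cube Q^n are subsets of {..<n} (coordinates 0..n-1).
  An orientation is given by its outmap s.\<close>

definition symdiff :: "nat set \<Rightarrow> nat set \<Rightarrow> nat set" where
  "symdiff u v = (u - v) \<union> (v - u)"

definition cube :: "nat \<Rightarrow> nat set set" where
  "cube n = {v. v \<subseteq> {..<n}}"

definition face :: "nat \<Rightarrow> nat set \<Rightarrow> nat set \<Rightarrow> nat set set" where
  "face n J v = {u \<in> cube n. symdiff v u \<subseteq> J}"

definition is_orientation :: "nat \<Rightarrow> (nat set \<Rightarrow> nat set) \<Rightarrow> bool" where
  "is_orientation n s \<longleftrightarrow>
     (\<forall>v \<in> cube n. s v \<subseteq> {..<n} \<and>
        (\<forall>j<n. j \<in> s v \<longleftrightarrow> j \<notin> s (symdiff v {j})))"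

definition is_sink_of_face :: "(nat set \<Rightarrow> nat set) \<Rightarrow> nat set \<Rightarrow> nat set \<Rightarrow> bool" where
  "is_sink_of_face s J u \<longleftrightarrow> s u \<inter> J = {}"

definition is_uso :: "nat \<Rightarrow> (nat set \<Rightarrow> nat set) \<Rightarrow> bool" where
  "is_uso n s \<longleftrightarrow> is_orientation n s \<and>
     (\<forall>J v. J \<subseteq> {..<n} \<longrightarrow> v \<in> cube n \<longrightarrow>
        (\<exists>!u. u \<in> face n J v \<and> is_sink_of_face s J u))"

definition face_sink :: "nat \<Rightarrow> (nat set \<Rightarrow> nat set) \<Rightarrow> nat set \<Rightarrow> nat set \<Rightarrow> nat set" where
  "face_sink n s J v = (THE u. u \<in> face n J v \<and> is_sink_of_face s J u)"

definition dir_edge :: "nat \<Rightarrow> (nat set \<Rightarrow> nat set) \<Rightarrow> nat set \<Rightarrow> nat set \<Rightarrow> bool" where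
  "dir_edge n s u w \<longleftrightarrow> u \<in> cube n \<and> (\<exists>j \<in> s u. j < n \<and> w = symdiff u {j})"

definition reachmap :: "nat \<Rightarrow> (nat set \<Rightarrow> nat set) \<Rightarrow> nat set \<Rightarrow> nat set" where
  "reachmap n s v = s v \<union> {j. \<exists>u. (dir_edge n s)\<^sup>*\<^sup>* v u \<and> j \<in> s u}"

text \<open>A (partial) run of Algorithm 1 with m completed loop iterations:
  vertices vs 0..vs m, sets Es 0..Es m, chosen coordinates bs 0..bs (m-1).\<close>
definition alg1_run :: "nat \<Rightarrow> (nat set \<Rightarrow> nat set) \<Rightarrow> nat set \<Rightarrow> nat \<Rightarrow>
    (nat \<Rightarrow> nat set) \<Rightarrow> (nat \<Rightarrow> nat set) \<Rightarrow> (nat \<Rightarrow> nat) \<Rightarrow> bool" where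
  "alg1_run n s v0 m vs Es bs \<longleftrightarrow>
     vs 0 = v0 \<and> Es 0 = {} \<and>
     (\<forall>j<m. s (vs j) \<noteq> {} \<and> bs j \<in> s (vs j) \<and>
        vs (Suc j) = face_sink n s (Es j) (symdiff (vs j) {bs j}) \<and>
        Es (Suc j) = insert (bs j) (Es j))"

text \<open>Vertex evaluations made by such a run: one evaluation of s(vs j) for j = 0..m
  (loop tests), plus the evaluations made by the Fibonacci Seesaw calls, where
  cost J v is the number of evaluations the Seesaw uses on the face F_{J,v}.\<close>
definition alg1_evals :: "(nat set \<Rightarrow> nat set \<Rightarrow> nat) \<Rightarrow> nat \<Rightarrow>
    (nat \<Rightarrow> nat set) \<Rightarrow> (nat \<Rightarrow> nat set) \<Rightarrow> (nat \<Rightarrow> nat) \<Rightarrow> nat" where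
  "alg1_evals cost m vs Es bs = Suc m + (\<Sum>j<m. cost (Es j) (symdiff (vs j) {bs j}))"

end

theory Submission
  imports Defs
begin

text \<open>Every vertex reaches the sink of each face containing it: split the face along one
  coordinate j; walk to the sink of the half containing the vertex and, if that sink still
  has an outgoing j-edge, cross it and walk to the sink of the other half, which is then the
  sink of the whole face. Hence each iterate of Algorithm 1 is reachable from v0; moreover
  the coordinate b chosen in step j lies in the outmap of v^j and never again in an outmap
  of a later iterate, so the E^j grow by fresh elements of the reachmap. Thus there are at
  most \<rho> = |r(v0)| iterations, and the j-th Seesaw call runs on a j-face, so the total cost
  is a geometric sum bounded by O(\<alpha>^\<rho>).\<close>

lemma mem_face_iff: "w \<in> face n J v \<longleftrightarrow> w \<in> cube n \<and> v - J = w - J"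
  unfolding face_def symdiff_def by blast

lemma flip_in_cube: "u \<in> cube n \<Longrightarrow> j < n \<Longrightarrow> symdiff u {j} \<in> cube n"
  unfolding cube_def symdiff_def by auto

lemma self_mem_face: "v \<in> cube n \<Longrightarrow> v \<in> face n J v"
  unfolding mem_face_iff by simp

lemma face_mono: "J \<subseteq> K \<Longrightarrow> face n J v \<subseteq> face n K v"
  unfolding face_def by blast

lemma face_eq_if_mem: "w \<in> face n J v \<Longrightarrow> face n J w = face n J v"
  unfolding face_def symdiff_def by blast

lemma flip_mem_face:
  "w \<in> face n J v \<Longrightarrow> j < n \<Longrightarrow> symdiff w {j} \<in> face n J (symdiff v {j})"
  unfolding mem_face_iff using flip_in_cube unfolding symdiff_def by blast

lemma face_insert_split:
  "w \<in> face n (insert j J) v \<Longrightarrow> w \<in> face n J v \<or> w \<in> face n J (symdiff v {j})"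
  unfolding mem_face_iff symdiff_def by blast

lemma uso_outmap_subset: "is_uso n s \<Longrightarrow> v \<in> cube n \<Longrightarrow> s v \<subseteq> {..<n}"
  unfolding is_uso_def is_orientation_def by blast

lemma face_sink_cong: "w \<in> face n J v \<Longrightarrow> face_sink n s J w = face_sink n s J v"
  unfolding face_sink_def by (simp add: face_eq_if_mem)

lemma
  assumes "is_uso n s" "J \<subseteq> {..<n}" "v \<in> cube n"
  shows face_sink_in_face: "face_sink n s J v \<in> face n J v"
    and outmap_face_sink_disjoint: "s (face_sink n s J v) \<inter> J = {}"
proof -
  have "\<exists>!u. u \<in> face n J v \<and> is_sink_of_face s J u"
    using assms unfolding is_uso_def by blast
  from theI'[OF this] show "face_sink n s J v \<in> face n J v" "s (face_sink n s J v) \<inter> J = {}"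
    unfolding face_sink_def is_sink_of_face_def by blast+
qed

lemma face_sink_eqI:
  assumes "is_uso n s" "J \<subseteq> {..<n}" "v \<in> cube n" "t \<in> face n J v" "s t \<inter> J = {}"
  shows "face_sink n s J v = t"
  using assms face_sink_in_face[OF assms(1-3)] outmap_face_sink_disjoint[OF assms(1-3)]
  unfolding is_uso_def is_sink_of_face_def by blast

lemma face_sink_insert_cases:
  assumes uso: "is_uso n s" and J: "insert j J \<subseteq> {..<n}" and u: "u \<in> cube n"
  shows "face_sink n s (insert j J) u \<in> {face_sink n s J u, face_sink n s J (symdiff u {j})}"
proof -
  let ?t = "face_sink n s (insert j J) u"
  have J': "J \<subseteq> {..<n}" and u': "symdiff u {j} \<in> cube n"
    using J flip_in_cube[OF u] by auto
  have sink: "s ?t \<inter> J = {}" using outmap_face_sink_disjoint[OF uso J u] by blast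
  from face_insert_split[OF face_sink_in_face[OF uso J u]] show ?thesis
    using face_sink_eqI[OF uso J' u _ sink] face_sink_eqI[OF uso J' u' _ sink] by auto
qed

lemma dir_edge_flip: "u \<in> cube n \<Longrightarrow> j \<in> s u \<Longrightarrow> j < n \<Longrightarrow> dir_edge n s u (symdiff u {j})"
  unfolding dir_edge_def by blast

lemma reachable_in_cube: "(dir_edge n s)\<^sup>*\<^sup>* v u \<Longrightarrow> v \<in> cube n \<Longrightarrow> u \<in> cube n"
  by (induction rule: rtranclp_induct) (auto simp: dir_edge_def flip_in_cube)

lemma face_sink_reachable:
  assumes uso: "is_uso n s" and J: "J \<subseteq> {..<n}" and u: "u \<in> cube n"
  shows "(dir_edge n s)\<^sup>*\<^sup>* u (face_sink n s J u)"
proof -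
  have "finite J" using J finite_subset by blast
  then show ?thesis using J u
  proof (induction J arbitrary: u rule: finite_induct)
    case empty
    then show ?case using face_sink_in_face[OF uso _ empty.prems(2), of "{}"]
      by (simp add: mem_face_iff)
  next
    case (insert j J)
    have J: "J \<subseteq> {..<n}" and j: "j < n" using insert.prems by auto
    define t0 where "t0 = face_sink n s J u"
    have t0: "t0 \<in> face n J u" "s t0 \<inter> J = {}" "(dir_edge n s)\<^sup>*\<^sup>* u t0"
      unfolding t0_def using face_sink_in_face[OF uso J] outmap_face_sink_disjoint[OF uso J]
        insert.IH[OF J] insert.prems by auto
    show ?case
    proof (cases "j \<in> s t0")
      case False
      then have "face_sink n s (insert j J) u = t0"
        using t0 face_mono[of J "insert j J"] by (intro face_sink_eqI[OF uso insert.prems]) auto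
      then show ?thesis using t0(3) by simp
    next
      case True
      define t1 where "t1 = symdiff t0 {j}"
      have t0c: "t0 \<in> cube n" using t0(1) by (simp add: mem_face_iff)
      have t1c: "t1 \<in> cube n" unfolding t1_def using flip_in_cube[OF t0c j] .
      have "face_sink n s (insert j J) u \<noteq> t0"
        using outmap_face_sink_disjoint[OF uso insert.prems] True by blast
      then have "face_sink n s (insert j J) u = face_sink n s J (symdiff u {j})"
        using face_sink_insert_cases[OF uso insert.prems] unfolding t0_def by blast
      also have "\<dots> = face_sink n s J t1"
        unfolding t1_def using face_sink_cong[OF flip_mem_face[OF t0(1) j]] by simp
      finally have "face_sink n s (insert j J) u = face_sink n s J t1" .
      moreover have "dir_edge n s t0 t1"
        unfolding t1_def using dir_edge_flip[of t0 n j s, OF t0c True j] .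
      ultimately show ?thesis
        using rtranclp_trans[OF t0(3) converse_rtranclp_into_rtranclp] insert.IH[OF J t1c] by simp
    qed
  qed
qed

lemma alg1_step:
  assumes uso: "is_uso n s" and v: "v \<in> cube n" and E: "E \<subseteq> {..<n}"
    and sink: "s v \<inter> E = {}" and b: "b \<in> s v"
  defines "w \<equiv> face_sink n s E (symdiff v {b})"
  shows "b < n" "b \<notin> E" "w \<in> cube n" "(dir_edge n s)\<^sup>*\<^sup>* v w" "s w \<inter> insert b E = {}"
proof -
  show bn: "b < n" using uso_outmap_subset[OF uso v] b by blast
  show "b \<notin> E" using sink b by blast
  have v': "symdiff v {b} \<in> cube n" using flip_in_cube[OF v bn] .
  show "w \<in> cube n" using face_sink_in_face[OF uso E v'] unfolding w_def mem_face_iff by blast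
  show "(dir_edge n s)\<^sup>*\<^sup>* v w"
    unfolding w_def using converse_rtranclp_into_rtranclp[OF dir_edge_flip[of v n b s, OF v b bn]
      face_sink_reachable[OF uso E v']] .
  have bE: "insert b E \<subseteq> {..<n}" using E bn by blast
  have "b \<notin> s (face_sink n s (insert b E) v)"
    using outmap_face_sink_disjoint[OF uso bE v] by blast
  then have "face_sink n s (insert b E) v \<noteq> v" using b by auto
  moreover have "face_sink n s E v = v"
    using face_sink_eqI[OF uso E v self_mem_face[OF v] sink] .
  ultimately have "face_sink n s (insert b E) v = w"
    using face_sink_insert_cases[OF uso bE v] unfolding w_def by blast
  then show "s w \<inter> insert b E = {}" using outmap_face_sink_disjoint[OF uso bE v] by simp
qed

lemma alg1_run_invariant:
  assumes uso: "is_uso n s" and v0: "v0 \<in> cube n" and run: "alg1_run n s v0 m vs Es bs"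
    and "j \<le> m"
  shows "vs j \<in> cube n \<and> (dir_edge n s)\<^sup>*\<^sup>* v0 (vs j) \<and> s (vs j) \<inter> Es j = {} \<and>
    Es j \<subseteq> {..<n} \<and> Es j \<subseteq> reachmap n s v0 \<and> card (Es j) = j"
  using \<open>j \<le> m\<close>
proof (induction j)
  case 0
  then show ?case using run v0 by (simp add: alg1_run_def)
next
  case (Suc j)
  then have IH: "vs j \<in> cube n" "(dir_edge n s)\<^sup>*\<^sup>* v0 (vs j)" "s (vs j) \<inter> Es j = {}"
      "Es j \<subseteq> {..<n}" "Es j \<subseteq> reachmap n s v0" "card (Es j) = j"
    by simp_all
  have b: "bs j \<in> s (vs j)"
    and vs: "vs (Suc j) = face_sink n s (Es j) (symdiff (vs j) {bs j})"
    and Es: "Es (Suc j) = insert (bs j) (Es j)"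
    using run Suc.prems unfolding alg1_run_def by (simp_all add: Suc_le_lessD)
  note step = alg1_step[OF uso IH(1,4,3) b, folded vs]
  have "bs j \<in> reachmap n s v0" using IH(2) b unfolding reachmap_def by blast
  moreover have "finite (Es j)" using IH(4) finite_subset by blast
  moreover note rtranclp_trans[OF IH(2) step(4)]
  ultimately show ?case using step IH unfolding Es by simp
qed

lemma alg1_run_length_le_reachmap:
  assumes uso: "is_uso n s" and v0: "v0 \<in> cube n" and run: "alg1_run n s v0 m vs Es bs"
  shows "m \<le> card (reachmap n s v0)"
proof -
  have "reachmap n s v0 \<subseteq> {..<n}"
    using uso_outmap_subset[OF uso] reachable_in_cube[OF _ v0] unfolding reachmap_def by blast
  then have "finite (reachmap n s v0)" using finite_subset by blast
  with alg1_run_invariant[OF uso v0 run order_refl] show ?thesis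
    by (metis card_mono)
qed

lemma alg1_evals_le:
  assumes uso: "is_uso n s" and v0: "v0 \<in> cube n" and run: "alg1_run n s v0 m vs Es bs"
    and cost: "\<forall>J v. J \<subseteq> {..<n} \<longrightarrow> v \<in> cube n \<longrightarrow> real (cost J v) \<le> c * \<alpha> ^ card J"
  shows "real (alg1_evals cost m vs Es bs) \<le> real m + 1 + c * (\<Sum>j<m. \<alpha> ^ j)"
proof -
  have "real (cost (Es j) (symdiff (vs j) {bs j})) \<le> c * \<alpha> ^ j" if "j < m" for j
  proof -
    have "bs j \<in> s (vs j)" using run that unfolding alg1_run_def by blast
    moreover note alg1_run_invariant[OF uso v0 run less_imp_le[OF that]]
    ultimately have "symdiff (vs j) {bs j} \<in> cube n"
      using alg1_step(1)[OF uso] flip_in_cube by blast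
    with alg1_run_invariant[OF uso v0 run less_imp_le[OF that]] show ?thesis
      using cost[rule_format, of "Es j" "symdiff (vs j) {bs j}"] by simp
  qed
  then have "(\<Sum>j<m. real (cost (Es j) (symdiff (vs j) {bs j}))) \<le> (\<Sum>j<m. c * \<alpha> ^ j)"
    by (intro sum_mono) simp
  then show ?thesis unfolding alg1_evals_def by (simp add: sum_distrib_left)
qed

lemma geometric_sum_le:
  fixes \<alpha> :: real
  assumes "1 < \<alpha>"
  shows "(\<Sum>j<m. \<alpha> ^ j) \<le> \<alpha> ^ m / (\<alpha> - 1)"
  using assms by (simp add: geometric_sum divide_right_mono)

lemma linear_plus_geometric_sum_le:
  fixes \<alpha> c :: real
  assumes \<alpha>: "1 < \<alpha>" and "m \<le> \<rho>"
  shows "real m + 1 + c * (\<Sum>j<m. \<alpha> ^ j) \<le> ((1 + \<bar>c\<bar>) / (\<alpha> - 1) + 1) * \<alpha> ^ \<rho>"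
proof -
  have mono: "(\<Sum>j<m. \<alpha> ^ j) \<le> (\<Sum>j<\<rho>. \<alpha> ^ j)"
    using \<open>m \<le> \<rho>\<close> \<alpha> by (intro sum_mono2) auto
  have "real m \<le> (\<Sum>j<m. \<alpha> ^ j)"
    using sum_mono[of "{..<m}" "\<lambda>_. 1::real" "\<lambda>j. \<alpha> ^ j"] \<alpha> by simp
  then have m: "real m \<le> \<alpha> ^ \<rho> / (\<alpha> - 1)"
    using mono geometric_sum_le[OF \<alpha>, of \<rho>] by linarith
  have "c * (\<Sum>j<m. \<alpha> ^ j) \<le> \<bar>c\<bar> * (\<Sum>j<m. \<alpha> ^ j)"
    using \<alpha> by (intro mult_right_mono) (auto intro: sum_nonneg)
  also have "\<dots> \<le> \<bar>c\<bar> * (\<alpha> ^ \<rho> / (\<alpha> - 1))"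
    using mono geometric_sum_le[OF \<alpha>, of \<rho>] by (intro mult_left_mono) auto
  finally have "c * (\<Sum>j<m. \<alpha> ^ j) \<le> \<bar>c\<bar> * (\<alpha> ^ \<rho> / (\<alpha> - 1))" .
  moreover have "1 \<le> \<alpha> ^ \<rho>" using \<alpha> by simp
  ultimately show ?thesis using m by (simp add: algebra_simps add_divide_distrib)
qed

text \<open>The hypothesis \<alpha> < \<phi> only matters for the existence of the Seesaw algorithm; the
  estimate itself holds for every \<alpha> > 1.\<close>
theorem theorem19:
  fixes \<alpha> c :: real
  assumes "1 < \<alpha>" and "\<alpha> < (1 + sqrt 5) / 2"
  shows "\<exists>C::real. \<forall>n s v0 (cost :: nat set \<Rightarrow> nat set \<Rightarrow> nat) m vs Es bs.
           is_uso n s \<longrightarrow> v0 \<in> cube n \<longrightarrow>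
           (\<forall>J v. J \<subseteq> {..<n} \<longrightarrow> v \<in> cube n \<longrightarrow> real (cost J v) \<le> c * \<alpha> ^ card J) \<longrightarrow>
           alg1_run n s v0 m vs Es bs \<longrightarrow>
           real (alg1_evals cost m vs Es bs) \<le> C * \<alpha> ^ card (reachmap n s v0)"
proof (intro exI[of _ "(1 + \<bar>c\<bar>) / (\<alpha> - 1) + 1"] allI impI)
  fix n s v0 m vs Es bs and cost :: "nat set \<Rightarrow> nat set \<Rightarrow> nat"
  assume uso: "is_uso n s" and v0: "v0 \<in> cube n"
    and cost: "\<forall>J v. J \<subseteq> {..<n} \<longrightarrow> v \<in> cube n \<longrightarrow> real (cost J v) \<le> c * \<alpha> ^ card J"
    and run: "alg1_run n s v0 m vs Es bs"
  have "real (alg1_evals cost m vs Es bs) \<le> real m + 1 + c * (\<Sum>j<m. \<alpha> ^ j)"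
    using alg1_evals_le[OF uso v0 run cost] .
  also have "\<dots> \<le> ((1 + \<bar>c\<bar>) / (\<alpha> - 1) + 1) * \<alpha> ^ card (reachmap n s v0)"
    using linear_plus_geometric_sum_le[OF \<open>1 < \<alpha>\<close> alg1_run_length_le_reachmap[OF uso v0 run]] .
  finally show "real (alg1_evals cost m vs Es bs) \<le>
      ((1 + \<bar>c\<bar>) / (\<alpha> - 1) + 1) * \<alpha> ^ card (reachmap n s v0)" .
qed

end
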